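(* For all $\delta_1,\delta_2\in\mathbb{N}^{-1}$, $$D(\delta_1\delta_2)\le D(\delta_1)\,D(\delta_2).$$
   Context: Write $e(z)=e^{2\pi i z}$ and $\gamma(\xi)=(\xi,\xi^2,\xi^3)$. For an interval $J\subset[0,1]$ and $g:[0,1]\to\mathbb{C}$ define $(\mathcal{E}_J g)(x)=\int_J g(\xi)\,e(x\cdot\gamma(\xi))\,d\xi$, $x\in\mathbb{R}^3$. $\mathbb{N}^{-1}=\{1/n:n\in\mathbb{N}\}$. For $\delta\in\mathbb{N}^{-1}$, $P_\delta([0,1])$ is the partition of $[0,1]$ into intervals of length $\delta$, and $D(\delta)$ is the smallest constant such that $\|\mathcal{E}_{[0,1]}g\|_{L^{12}(\mathbb{R}^3)}\le D(\delta)\big(\sum_{J\in P_\delta([0,1])}\|\mathcal{E}_J g\|_{L^{12}(\mathbb{R}^3)}^4\big)^{1/4}$ for all $g:[0,1]\to\mathbb{C}$. *)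

theory Defs
  imports "HOL-Analysis.Analysis"
begin

definition e_char :: "real \<Rightarrow> complex" where
  "e_char z = exp (2 * of_real pi * \<i> * of_real z)"

definition ext_op :: "real set \<Rightarrow> (real \<Rightarrow> complex) \<Rightarrow> real^3 \<Rightarrow> complex" where
  "ext_op J g x = (LINT \<xi>:J|lborel. g \<xi> * e_char (x$1 * \<xi> + x$2 * \<xi>^2 + x$3 * \<xi>^3))"

definition enn_root :: "real \<Rightarrow> ennreal \<Rightarrow> ennreal" where
  "enn_root p a = (if a = top then top else ennreal (enn2real a powr (1 / p)))"

definition L12_norm :: "(real^3 \<Rightarrow> complex) \<Rightarrow> ennreal" where
  "L12_norm f = enn_root 12 (\<integral>\<^sup>+ x. ennreal (cmod (f x)) ^ 12 \<partial>lborel)"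

definition part :: "real \<Rightarrow> real set set" where
  "part \<delta> = {J. \<exists>k::nat. real k < 1 / \<delta> \<and> J = {real k * \<delta> .. (real k + 1) * \<delta>}}"

definition Dec :: "real \<Rightarrow> ennreal" where
  "Dec \<delta> = Inf {C. \<forall>g :: real \<Rightarrow> complex. set_integrable lborel {0..1} g \<longrightarrow>
      L12_norm (ext_op {0..1} g)
        \<le> C * enn_root 4 (\<Sum>J\<in>part \<delta>. L12_norm (ext_op J g) ^ 4)}"

end

theory Submission
  imports Defs
begin

text \<open>If \<open>C\<^sub>2\<close> is an admissible constant at scale \<open>\<delta>\<^sub>2\<close>, then it is admissible, relative to the
  induced partition, on every interval of length \<open>\<delta>\<^sub>1\<close>: the affine change \<open>\<xi> = a + \<delta>\<^sub>1 \<eta>\<close> maps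
  the moment curve onto an affine image of itself, and the \<open>L\<^sup>1\<^sup>2\<close> norms of the extensions of all
  pieces scale by the same factor \<open>\<delta>\<^sub>1\<^sup>1\<^sup>/\<^sup>2\<close> (the linear map on the dual side has
  determinant \<open>\<delta>\<^sub>1\<^sup>6\<close>). Decoupling \<open>[0,1]\<close> first into intervals of length \<open>\<delta>\<^sub>1\<close> and then each of
  them into intervals of length \<open>\<delta>\<^sub>1\<delta>\<^sub>2\<close> shows that \<open>C\<^sub>1 C\<^sub>2\<close> is admissible at scale
  \<open>\<delta>\<^sub>1\<delta>\<^sub>2\<close>. Passing to infima needs \<open>D(\<delta>\<^sub>1), D(\<delta>\<^sub>2) < \<infinity>\<close>, which the triangle inequality
  provides.\<close>

lemma enn_root_ennreal: "0 \<le> x \<Longrightarrow> enn_root p (ennreal x) = ennreal (x powr (1 / p))"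
  by (simp add: enn_root_def)

lemma enn_root_top [simp]: "enn_root p top = top"
  by (simp add: enn_root_def)

lemma enn_root_zero [simp]: "enn_root p 0 = 0"
  by (simp add: enn_root_def)

lemma enn_root_nat_ennreal:
  "0 < n \<Longrightarrow> 0 \<le> x \<Longrightarrow> enn_root (real n) (ennreal x) = ennreal (root n x)"
  by (simp add: enn_root_ennreal root_powr_inverse)

lemma enn_root_eq_0_iff [simp]: "0 < p \<Longrightarrow> enn_root p a = 0 \<longleftrightarrow> a = 0"
  by (cases a rule: ennreal_cases) (auto simp: enn_root_ennreal)

lemma enn_root_mono:
  assumes "0 < p" and "a \<le> b"
  shows "enn_root p a \<le> enn_root p b"
proof (cases b rule: ennreal_cases)
  case (real y)
  with assms(2) obtain x where "a = ennreal x" "0 \<le> x" "x \<le> y"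
    by (cases a rule: ennreal_cases) (auto simp: top_unique)
  with real assms(1) show ?thesis
    by (simp add: enn_root_ennreal powr_mono2)
qed simp

lemma enn_root_mult:
  assumes "0 < p"
  shows "enn_root p (a * b) = enn_root p a * enn_root p b"
proof (cases "a = 0 \<or> b = 0")
  case True
  with assms show ?thesis by auto
next
  case nonzero: False
  show ?thesis
  proof (cases "a = top \<or> b = top")
    case True
    with nonzero assms show ?thesis
      by (auto simp: ennreal_mult_eq_top_iff)
  next
    case False
    then obtain x y where "a = ennreal x" "b = ennreal y" "0 \<le> x" "0 \<le> y"
      by (cases a rule: ennreal_cases; cases b rule: ennreal_cases) auto
    then show ?thesis
      by (simp add: enn_root_ennreal powr_mult ennreal_mult flip: ennreal_mult)
  qed
qed

lemma enn_root_power: "0 < n \<Longrightarrow> enn_root (real n) (x ^ n) = x"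
  by (cases x rule: ennreal_cases)
     (simp_all add: enn_root_nat_ennreal ennreal_power real_root_power_cancel top_power_ennreal)

lemma power_enn_root: "0 < n \<Longrightarrow> enn_root (real n) x ^ n = x"
  by (cases x rule: ennreal_cases)
     (simp_all add: enn_root_nat_ennreal ennreal_power top_power_ennreal)

lemma enn_root_power_mult:
  assumes "0 < m" and "0 < n"
  shows "enn_root (real (m * n)) (x ^ n) = enn_root (real m) x"
proof -
  have "x ^ n = enn_root (real m) x ^ (m * n)"
    using power_enn_root[OF assms(1)] by (simp add: power_mult)
  then show ?thesis
    using assms by (simp only: enn_root_power mult_pos_pos)
qed

lemma ennreal_mult_Inf:
  fixes c :: ennreal
  assumes "c < top" and "B \<noteq> {}"
  shows "c * Inf B = (INF y\<in>B. c * y)"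
proof (rule continuous_at_Inf_mono)
  show "continuous (at_right (Inf B)) ((*) c)"
    using ennreal_continuous_on_cmult[OF \<open>c < top\<close> continuous_on_id[of UNIV]]
    by (rule continuous_on_imp_continuous_within) simp_all
qed (auto simp: mono_def mult_left_mono assms(2))

text \<open>The finiteness assumptions are needed because \<open>\<top> * 0 = 0\<close>.\<close>

lemma le_Inf_mult_Inf_ennreal:
  fixes z :: ennreal
  assumes le: "\<And>x y. x \<in> A \<Longrightarrow> y \<in> B \<Longrightarrow> z \<le> x * y"
    and "Inf A < top" and "Inf B < top"
  shows "z \<le> Inf A * Inf B"
proof -
  have Inf_finite: "Inf (A - {top}) = Inf A"
  proof (rule antisym)
    show "Inf (A - {top}) \<le> Inf A"
      by (rule Inf_greatest) (metis Diff_iff Inf_lower singletonD top_greatest)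
  qed (rule Inf_superset_mono, blast)
  have "A - {top} \<noteq> {}" "B \<noteq> {}"
    using assms(2,3) unfolding Inf_finite[symmetric] by (metis Inf_empty less_irrefl)+
  have "z \<le> Inf B * x" if "x \<in> A - {top}" for x
  proof -
    have "Inf B * x = (INF y\<in>B. x * y)"
      using ennreal_mult_Inf[of x B] that \<open>B \<noteq> {}\<close> by (simp add: mult.commute top.not_eq_extremum)
    then show ?thesis
      using le that by (auto intro: INF_greatest)
  qed
  then have "z \<le> (INF x\<in>A - {top}. Inf B * x)"
    by (rule INF_greatest)
  also have "\<dots> = Inf A * Inf B"
    using ennreal_mult_Inf[OF assms(3) \<open>A - {top} \<noteq> {}\<close>] Inf_finite by (simp add: mult.commute)
  finally show ?thesis .
qed

lemma sum_power_le_card_power_mult_sum_power: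
  fixes b :: "'a \<Rightarrow> real"
  assumes "finite A" "A \<noteq> {}" and nonneg: "\<And>k. k \<in> A \<Longrightarrow> 0 \<le> b k"
  shows "(\<Sum>k\<in>A. b k) ^ p \<le> real (card A) ^ p * (\<Sum>k\<in>A. b k ^ p)"
proof -
  define M where "M = Max (b ` A)"
  have "M \<in> b ` A" and le_M: "\<And>k. k \<in> A \<Longrightarrow> b k \<le> M"
    using assms(1,2) by (auto simp: M_def)
  have "M ^ p \<le> (\<Sum>k\<in>A. b k ^ p)"
    using \<open>M \<in> b ` A\<close> assms(1) by (auto intro!: member_le_sum simp: nonneg)
  have "(\<Sum>k\<in>A. b k) ^ p \<le> (real (card A) * M) ^ p"
    using sum_bounded_above[of A b M] le_M by (intro power_mono) (auto intro: sum_nonneg nonneg)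
  also have "\<dots> = real (card A) ^ p * M ^ p"
    by (rule power_mult_distrib)
  also have "\<dots> \<le> real (card A) ^ p * (\<Sum>k\<in>A. b k ^ p)"
    using \<open>M ^ p \<le> (\<Sum>k\<in>A. b k ^ p)\<close> by (rule mult_left_mono) simp
  finally show ?thesis .
qed

lemma sum_lessThan_mult_nat:
  "(\<Sum>k<m * n. G k) = (\<Sum>i<m. \<Sum>j<n. G (i * n + j :: nat))"
proof (induction m)
  case (Suc m)
  have "(\<Sum>k<Suc m * n. G k) = (\<Sum>k<m * n. G k) + (\<Sum>k=m * n..<m * n + n. G k)"
    by (simp add: lessThan_atLeast0 sum.atLeastLessThan_concat add.commute)
  also have "(\<Sum>k=m * n..<m * n + n. G k) = (\<Sum>j<n. G (m * n + j))"
    using sum.shift_bounds_nat_ivl[of G 0 "m * n" n] by (simp add: lessThan_atLeast0 add.commute)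
  finally show ?case
    using Suc by simp
qed simp

lemma nn_integral_lborel_linear:
  fixes T :: "(real, 'n::{finite,wellorder}) vec \<Rightarrow> (real, 'n) vec"
  assumes T: "linear T" and det: "det (matrix T) \<noteq> 0"
    and [measurable]: "f \<in> borel_measurable borel"
  shows "(\<integral>\<^sup>+y. f y \<partial>lborel) = ennreal \<bar>det (matrix T)\<bar> * (\<integral>\<^sup>+x. f (T x) \<partial>lborel)"
proof -
  obtain T' where T': "linear T'" "\<And>x. T' (T x) = x" "\<And>x. T (T' x) = x"
    using linear_injective_isomorphism[OF T] det det_nz_iff_inj[OF T] by metis
  have "det (matrix T') * det (matrix T) = 1"
    using matrix_compose[OF T T'(1)] T'(2)
    by (metis (no_types) comp_apply det_I det_mul eq_id_iff matrix_id_mat_1)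
  have [measurable]: "T \<in> borel_measurable borel"
    using T by (intro borel_measurable_continuous_onI linear_continuous_on) (simp add: linear_conv_bounded_linear)
  define M where "M = density (distr lborel borel T) (\<lambda>_. ennreal \<bar>det (matrix T)\<bar>)"
  have "lborel = M"
  proof (rule lborel_eqI)
    fix l u :: "(real, 'n) vec"
    assume le: "\<And>b. b \<in> Basis \<Longrightarrow> l \<bullet> b \<le> u \<bullet> b"
    have preimage: "T -` box l u = T' ` box l u"
      using T' by (auto intro!: image_eqI)
    have "T -` box l u \<in> sets borel"
      using measurable_sets_borel[of T borel "box l u"] by simp
    then have "emeasure M (box l u) = ennreal \<bar>det (matrix T)\<bar> * emeasure lebesgue (T' ` box l u)"
      unfolding M_def by (simp add: emeasure_density emeasure_distr nn_integral_cmult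
          flip: preimage)
    also have "\<dots> = ennreal (\<bar>det (matrix T)\<bar> * (\<bar>det (matrix T')\<bar> * measure lebesgue (box l u)))"
      using measurable_linear_image[OF T'(1)] measure_linear_image[OF T'(1)]
      by (simp add: emeasure_eq_measure2 ennreal_mult)
    also have "\<dots> = ennreal (prod ((\<bullet>) (u - l)) Basis)"
      using le \<open>det (matrix T') * det (matrix T) = 1\<close>
      by (simp add: measure_lborel_box_eq mult.assoc[symmetric] abs_mult[symmetric] mult.commute)
    finally show "emeasure M (box l u) = ennreal (prod ((\<bullet>) (u - l)) Basis)" .
  qed (simp add: M_def)
  then have "(\<integral>\<^sup>+y. f y \<partial>lborel) = (\<integral>\<^sup>+y. f y \<partial>M)"
    by simp
  then show ?thesis
    unfolding M_def by (simp add: nn_integral_density nn_integral_distr nn_integral_cmult)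
qed

lemma e_char_measurable [measurable]: "e_char \<in> borel_measurable borel"
  unfolding e_char_def by (intro borel_measurable_continuous_onI continuous_intros)

lemma e_char_add: "e_char (u + v) = e_char u * e_char v"
  by (simp add: e_char_def distrib_left exp_add)

lemma norm_e_char [simp]: "cmod (e_char u) = 1"
proof -
  have "e_char u = exp (\<i> * complex_of_real (2 * pi * u))"
    by (simp add: e_char_def mult_ac)
  then show ?thesis
    by (simp only: norm_exp_i_times)
qed

definition moment_phase :: "real^3 \<Rightarrow> real \<Rightarrow> real" where
  "moment_phase x \<xi> = x$1 * \<xi> + x$2 * \<xi>^2 + x$3 * \<xi>^3"

lemma ext_op_moment_phase: "ext_op J g x = (LINT \<xi>:J|lborel. g \<xi> * e_char (moment_phase x \<xi>))"
  by (simp add: ext_op_def moment_phase_def)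

lemma vec_nth_measurable [measurable]: "(\<lambda>x::real^'n. x $ i) \<in> borel_measurable borel"
  by (intro borel_measurable_continuous_onI continuous_intros)

lemma moment_phase_measurable [measurable]: "moment_phase x \<in> borel_measurable borel"
  unfolding moment_phase_def[abs_def] by measurable

lemma ext_op_measurable [measurable]:
  assumes [measurable]: "g \<in> borel_measurable borel" "J \<in> sets borel"
  shows "ext_op J g \<in> borel_measurable borel"
proof -
  have "sets (borel \<Otimes>\<^sub>M lborel) = sets ((borel :: (real^3) measure) \<Otimes>\<^sub>M (borel :: real measure))"
    by (rule sets_pair_measure_cong) auto
  then show ?thesis
    unfolding ext_op_def set_lebesgue_integral_def
    by (intro lborel.borel_measurable_lebesgue_integral, subst measurable_cong_sets[OF _ refl])
      measurable
qed

text \<open>Writing \<open>\<gamma>(a + s \<eta>) = \<gamma>(a) + A \<gamma>(\<eta>)\<close> with \<open>A\<close> lower triangular, the map below is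
  \<open>x \<mapsto> A\<^sup>T x\<close>.\<close>

definition moment_rescale :: "real \<Rightarrow> real \<Rightarrow> real^3 \<Rightarrow> real^3" where
  "moment_rescale a s x =
     vector [s * (x$1 + 2 * a * x$2 + 3 * a^2 * x$3), s^2 * (x$2 + 3 * a * x$3), s^3 * x$3]"

lemma moment_rescale_nth:
  "moment_rescale a s x $ 1 = s * (x$1 + 2 * a * x$2 + 3 * a^2 * x$3)"
  "moment_rescale a s x $ 2 = s^2 * (x$2 + 3 * a * x$3)"
  "moment_rescale a s x $ 3 = s^3 * x$3"
  by (simp_all add: moment_rescale_def)

lemma moment_phase_affine:
  "moment_phase x (a + s * \<eta>) = moment_phase x a + moment_phase (moment_rescale a s x) \<eta>"
  by (simp add: moment_phase_def moment_rescale_nth power2_eq_square power3_eq_cube algebra_simps)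

lemma linear_moment_rescale: "linear (moment_rescale a s)"
  by (rule linearI) (simp_all add: vec_eq_iff forall_3 moment_rescale_nth algebra_simps)

lemma det_moment_rescale: "det (matrix (moment_rescale a s)) = s^6"
  by (simp add: det_3 matrix_def moment_rescale_nth axis_def eval_nat_numeral)

lemma moment_rescale_measurable [measurable]: "moment_rescale a s \<in> borel_measurable borel"
  using linear_moment_rescale[of a s]
  by (intro borel_measurable_continuous_onI linear_continuous_on) (simp add: linear_conv_bounded_linear)

lemma ext_op_affine:
  assumes "0 < s"
  shows "ext_op {a + s * c .. a + s * d} g x
       = (of_real s * e_char (moment_phase x a)) * ext_op {c..d} (\<lambda>\<eta>. g (a + s * \<eta>)) (moment_rescale a s x)"
proof -
  have indicator_affine: "indicator {a + s * c .. a + s * d} (a + s * \<eta>) = (indicator {c..d} \<eta> :: real)"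
    for \<eta>
    using assms by (simp add: indicator_def mult_le_cancel_left_pos)
  have "ext_op {a + s * c .. a + s * d} g x
      = (\<integral>\<xi>. indicator {a + s * c .. a + s * d} \<xi> *\<^sub>R (g \<xi> * e_char (moment_phase x \<xi>)) \<partial>lborel)"
    by (simp add: ext_op_moment_phase set_lebesgue_integral_def)
  also have "\<dots> = s *\<^sub>R (\<integral>\<eta>. indicator {a + s * c .. a + s * d} (a + s * \<eta>) *\<^sub>R
                     (g (a + s * \<eta>) * e_char (moment_phase x (a + s * \<eta>))) \<partial>lborel)"
    using lborel_integral_real_affine[of s _ a] assms by simp
  also have "\<dots> = s *\<^sub>R (\<integral>\<eta>. e_char (moment_phase x a) * (indicator {c..d} \<eta> *\<^sub>R
                     (g (a + s * \<eta>) * e_char (moment_phase (moment_rescale a s x) \<eta>))) \<partial>lborel)"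
    unfolding indicator_affine moment_phase_affine e_char_add by (simp add: mult_ac)
  finally show ?thesis
    by (simp add: ext_op_moment_phase set_lebesgue_integral_def scaleR_conv_of_real mult_ac)
qed

lemma L12_norm_ext_op_affine:
  assumes "0 < s" and [measurable]: "g \<in> borel_measurable borel"
  shows "L12_norm (ext_op {a + s * c .. a + s * d} g)
       = enn_root 12 (ennreal (s^6)) * L12_norm (ext_op {c..d} (\<lambda>\<eta>. g (a + s * \<eta>)))"
proof -
  define F where "F y = ennreal (cmod (ext_op {c..d} (\<lambda>\<eta>. g (a + s * \<eta>)) y)) ^ 12" for y
  have [measurable]: "F \<in> borel_measurable borel"
    unfolding F_def by measurable
  have "ennreal (cmod (ext_op {a + s * c .. a + s * d} g x)) ^ 12
      = ennreal (s^6) * ennreal (s^6) * F (moment_rescale a s x)" for x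
    using assms(1)
    by (simp add: F_def ext_op_affine norm_mult ennreal_mult' power_mult_distrib
        flip: ennreal_power power_add)
  then have "(\<integral>\<^sup>+x. ennreal (cmod (ext_op {a + s * c .. a + s * d} g x)) ^ 12 \<partial>lborel)
      = ennreal (s^6) * (ennreal (s^6) * (\<integral>\<^sup>+x. F (moment_rescale a s x) \<partial>lborel))"
    by (simp add: nn_integral_cmult mult.assoc)
  also have "\<dots> = ennreal (s^6) * (\<integral>\<^sup>+y. F y \<partial>lborel)"
    using nn_integral_lborel_linear[OF linear_moment_rescale, of a s F] assms(1)
    by (simp add: det_moment_rescale)
  finally show ?thesis
    unfolding L12_norm_def by (simp add: enn_root_mult F_def)
qed

definition grid_ivl :: "nat \<Rightarrow> nat \<Rightarrow> real set" where
  "grid_ivl n k = {real k / real n .. (real k + 1) / real n}"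

lemma part_inverse_nat: "0 < n \<Longrightarrow> part (1 / real n) = grid_ivl n ` {..<n}"
  unfolding part_def grid_ivl_def by (auto simp: divide_inverse mult.commute)

lemma inj_on_grid_ivl: "0 < n \<Longrightarrow> inj_on (grid_ivl n) {..<n}"
  by (rule inj_onI) (auto simp: grid_ivl_def divide_right_mono)

lemma sum_part_inverse_nat:
  "0 < n \<Longrightarrow> (\<Sum>J\<in>part (1 / real n). F J) = (\<Sum>k<n. F (grid_ivl n k))"
  by (simp add: part_inverse_nat sum.reindex inj_on_grid_ivl)

lemma grid_ivl_measurable [measurable]: "grid_ivl n k \<in> sets borel"
  by (simp add: grid_ivl_def)

lemma grid_ivl_subset: "k < n \<Longrightarrow> grid_ivl n k \<subseteq> {0..1}"
  unfolding grid_ivl_def by (auto simp: field_simps)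

lemma ext_op_sum_grid_ivl:
  assumes g: "integrable lborel g" and "0 < n"
  shows "ext_op {0..1} g x = (\<Sum>k<n. ext_op (grid_ivl n k) g x)"
proof -
  define F where "F \<xi> = g \<xi> * e_char (moment_phase x \<xi>)" for \<xi>
  have [measurable]: "g \<in> borel_measurable borel"
    using borel_measurable_integrable[OF g] by simp
  have [measurable]: "F \<in> borel_measurable borel"
    unfolding F_def[abs_def] by measurable
  have "integrable lborel F"
    by (rule Bochner_Integration.integrable_bound[OF g]) (auto simp: F_def norm_mult)
  then have F_integrable: "interval_lebesgue_integrable lborel u v F" for u v
    unfolding interval_lebesgue_integrable_def set_integrable_def
    by (auto intro!: integrable_mult_indicator)
  have ext_op_eq: "ext_op {u..v} g x = (LBINT \<xi>=ereal u..ereal v. F \<xi>)" if "u \<le> v" for u v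
    using that by (simp add: interval_integral_Icc ext_op_moment_phase F_def)
  have partial_sums: "(\<Sum>k<m. (LBINT \<xi>=ereal (real k / n)..ereal ((real k + 1) / n). F \<xi>))
      = (LBINT \<xi>=ereal 0..ereal (real m / n). F \<xi>)" for m
  proof (induction m)
    case (Suc m)
    then show ?case
      using interval_integral_sum[OF F_integrable, of 0 "real m / n" "(real m + 1) / n"]
      by (simp add: add.commute zero_ereal_def)
  qed simp
  show ?thesis
    using partial_sums[of n] \<open>0 < n\<close>
    by (simp add: ext_op_eq grid_ivl_def divide_right_mono)
qed

lemma ext_op_power_le_sum_grid_ivl:
  assumes g: "integrable lborel g" and "0 < n"
  shows "ennreal (cmod (ext_op {0..1} g x)) ^ 12
      \<le> ennreal (real n ^ 12) * (\<Sum>k<n. ennreal (cmod (ext_op (grid_ivl n k) g x)) ^ 12)"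
proof -
  have "cmod (ext_op {0..1} g x) ^ 12 \<le> (\<Sum>k<n. cmod (ext_op (grid_ivl n k) g x)) ^ 12"
    unfolding ext_op_sum_grid_ivl[OF g \<open>0 < n\<close>] by (intro power_mono norm_sum) simp
  also have "\<dots> \<le> real n ^ 12 * (\<Sum>k<n. cmod (ext_op (grid_ivl n k) g x) ^ 12)"
    using sum_power_le_card_power_mult_sum_power[of "{..<n}" "\<lambda>k. cmod (ext_op (grid_ivl n k) g x)"]
      \<open>0 < n\<close> by (simp add: lessThan_empty_iff)
  finally have "ennreal (cmod (ext_op {0..1} g x) ^ 12)
      \<le> ennreal (real n ^ 12 * (\<Sum>k<n. cmod (ext_op (grid_ivl n k) g x) ^ 12))"
    by (rule ennreal_leI)
  then show ?thesis
    by (simp add: ennreal_power ennreal_mult sum_nonneg sum_ennreal[symmetric] del: sum_ennreal)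
qed

definition decoupling_constants :: "real \<Rightarrow> ennreal set" where
  "decoupling_constants \<delta> = {C. \<forall>g :: real \<Rightarrow> complex. set_integrable lborel {0..1} g \<longrightarrow>
      L12_norm (ext_op {0..1} g) \<le> C * enn_root 4 (\<Sum>J\<in>part \<delta>. L12_norm (ext_op J g) ^ 4)}"

lemma Dec_eq_Inf_decoupling_constants: "Dec \<delta> = Inf (decoupling_constants \<delta>)"
  unfolding Dec_def decoupling_constants_def ..

lemma ext_op_indicator:
  "J \<subseteq> S \<Longrightarrow> ext_op J (\<lambda>\<xi>. indicator S \<xi> *\<^sub>R g \<xi>) = ext_op J g"
  unfolding ext_op_def set_lebesgue_integral_def
  by (intro ext Bochner_Integration.integral_cong refl) (auto simp: indicator_def)

lemma decoupling_constants_iff: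
  assumes "0 < n"
  shows "C \<in> decoupling_constants (1 / real n) \<longleftrightarrow>
    (\<forall>g. integrable lborel g \<longrightarrow>
      L12_norm (ext_op {0..1} g) \<le> C * enn_root 4 (\<Sum>k<n. L12_norm (ext_op (grid_ivl n k) g) ^ 4))"
proof
  assume C: "C \<in> decoupling_constants (1 / real n)"
  show "\<forall>g. integrable lborel g \<longrightarrow> L12_norm (ext_op {0..1} g)
      \<le> C * enn_root 4 (\<Sum>k<n. L12_norm (ext_op (grid_ivl n k) g) ^ 4)"
  proof (intro allI impI)
    fix g :: "real \<Rightarrow> complex"
    assume "integrable lborel g"
    then have "set_integrable lborel {0..1} g"
      unfolding set_integrable_def by (intro integrable_mult_indicator) auto
    with C assms show "L12_norm (ext_op {0..1} g)
        \<le> C * enn_root 4 (\<Sum>k<n. L12_norm (ext_op (grid_ivl n k) g) ^ 4)"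
      by (simp add: decoupling_constants_def sum_part_inverse_nat)
  qed
next
  assume C: "\<forall>g. integrable lborel g \<longrightarrow>
    L12_norm (ext_op {0..1} g) \<le> C * enn_root 4 (\<Sum>k<n. L12_norm (ext_op (grid_ivl n k) g) ^ 4)"
  show "C \<in> decoupling_constants (1 / real n)"
    unfolding decoupling_constants_def
  proof (intro CollectI allI impI)
    fix g :: "real \<Rightarrow> complex"
    assume "set_integrable lborel {0..1} g"
    then have "integrable lborel (\<lambda>\<xi>. indicator {0..1} \<xi> *\<^sub>R g \<xi>)"
      unfolding set_integrable_def .
    with C assms show "L12_norm (ext_op {0..1} g)
        \<le> C * enn_root 4 (\<Sum>J\<in>part (1 / real n). L12_norm (ext_op J g) ^ 4)"
      by (force simp: sum_part_inverse_nat ext_op_indicator grid_ivl_subset)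
  qed
qed

lemma decoupling_on_interval:
  assumes C: "C \<in> decoupling_constants (1 / real n)" and "0 < n" "0 < s"
    and g: "integrable lborel g"
  shows "L12_norm (ext_op {a .. a + s} g)
      \<le> C * enn_root 4 (\<Sum>j<n.
          L12_norm (ext_op {a + s * (real j / real n) .. a + s * ((real j + 1) / real n)} g) ^ 4)"
proof -
  define h where "h = (\<lambda>\<eta>. g (a + s * \<eta>))"
  define K where "K = enn_root 12 (ennreal (s^6))"
  have g_meas [measurable]: "g \<in> borel_measurable borel"
    using borel_measurable_integrable[OF g] by simp
  have "integrable lborel h"
    unfolding h_def using g \<open>0 < s\<close> by (intro lborel_integrable_real_affine) auto
  then have bound_h: "L12_norm (ext_op {0..1} h)
      \<le> C * enn_root 4 (\<Sum>j<n. L12_norm (ext_op (grid_ivl n j) h) ^ 4)"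
    using C \<open>0 < n\<close> by (simp add: decoupling_constants_iff)
  have "L12_norm (ext_op {a .. a + s} g) = K * L12_norm (ext_op {0..1} h)"
    using L12_norm_ext_op_affine[OF \<open>0 < s\<close>, of g a 0 1] by (simp add: K_def h_def)
  also have "\<dots> \<le> K * (C * enn_root 4 (\<Sum>j<n. L12_norm (ext_op (grid_ivl n j) h) ^ 4))"
    using bound_h by (rule mult_left_mono) simp
  also have "\<dots> = C * enn_root 4 (\<Sum>j<n. (K * L12_norm (ext_op (grid_ivl n j) h)) ^ 4)"
    using enn_root_power[of 4 K]
    by (simp add: enn_root_mult power_mult_distrib mult_ac flip: sum_distrib_left)
  also have "\<dots> = C * enn_root 4 (\<Sum>j<n.
      L12_norm (ext_op {a + s * (real j / real n) .. a + s * ((real j + 1) / real n)} g) ^ 4)"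
    unfolding L12_norm_ext_op_affine[OF \<open>0 < s\<close> g_meas] K_def h_def grid_ivl_def ..
  finally show ?thesis .
qed

lemma decoupling_constants_mult:
  assumes "0 < m" "0 < n"
    and C1: "C1 \<in> decoupling_constants (1 / real m)"
    and C2: "C2 \<in> decoupling_constants (1 / real n)"
  shows "C1 * C2 \<in> decoupling_constants (1 / real (m * n))"
proof -
  have grid_coarse: "grid_ivl m i = {real i / real m .. real i / real m + 1 / real m}" for i
    by (simp add: grid_ivl_def add_divide_distrib)
  have grid_fine: "grid_ivl (m * n) (i * n + j) = {real i / real m + 1 / real m * (real j / real n)
      .. real i / real m + 1 / real m * ((real j + 1) / real n)}" for i j
    using assms(1,2) by (simp add: grid_ivl_def field_simps)
  have "L12_norm (ext_op {0..1} g)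
      \<le> C1 * C2 * enn_root 4 (\<Sum>k<m * n. L12_norm (ext_op (grid_ivl (m * n) k) g) ^ 4)"
    if g: "integrable lborel g" for g
  proof -
    have piece: "L12_norm (ext_op (grid_ivl m i) g) ^ 4
        \<le> C2 ^ 4 * (\<Sum>j<n. L12_norm (ext_op (grid_ivl (m * n) (i * n + j)) g) ^ 4)" for i
    proof -
      have "L12_norm (ext_op (grid_ivl m i) g)
          \<le> C2 * enn_root 4 (\<Sum>j<n. L12_norm (ext_op (grid_ivl (m * n) (i * n + j)) g) ^ 4)"
        unfolding grid_fine grid_coarse
        by (rule decoupling_on_interval[OF C2 \<open>0 < n\<close> _ g]) (simp add: \<open>0 < m\<close>)
      from power_mono[OF this, of 4] show ?thesis
        using power_enn_root[of 4] by (simp add: power_mult_distrib)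
    qed
    have "L12_norm (ext_op {0..1} g) \<le> C1 * enn_root 4 (\<Sum>i<m. L12_norm (ext_op (grid_ivl m i) g) ^ 4)"
      using C1 g \<open>0 < m\<close> by (simp add: decoupling_constants_iff)
    also have "\<dots> \<le> C1 * enn_root 4 (\<Sum>i<m. C2 ^ 4 *
        (\<Sum>j<n. L12_norm (ext_op (grid_ivl (m * n) (i * n + j)) g) ^ 4))"
      by (intro mult_left_mono enn_root_mono sum_mono piece) simp_all
    also have "\<dots> = C1 * C2 * enn_root 4 (\<Sum>k<m * n. L12_norm (ext_op (grid_ivl (m * n) k) g) ^ 4)"
      using enn_root_power[of 4 C2]
      by (simp add: sum_lessThan_mult_nat enn_root_mult mult_ac flip: sum_distrib_left)
    finally show ?thesis .
  qed
  with assms(1,2) show ?thesis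
    by (subst decoupling_constants_iff) auto
qed

text \<open>The power of \<open>n\<close> is wasteful; only finiteness of the constant is used.\<close>

lemma decoupling_constants_trivial:
  assumes "0 < n"
  shows "enn_root 12 (ennreal (real n ^ 13)) \<in> decoupling_constants (1 / real n)"
  unfolding decoupling_constants_iff[OF assms]
proof (intro allI impI)
  fix g :: "real \<Rightarrow> complex"
  assume g: "integrable lborel g"
  have [measurable]: "g \<in> borel_measurable borel"
    using borel_measurable_integrable[OF g] by simp
  define W where "W = (\<Sum>k<n. L12_norm (ext_op (grid_ivl n k) g) ^ 4)"
  have piece: "L12_norm (ext_op (grid_ivl n k) g) ^ 12 \<le> W ^ 3" if "k < n" for k
  proof -
    have "L12_norm (ext_op (grid_ivl n k) g) ^ 12 = (L12_norm (ext_op (grid_ivl n k) g) ^ 4) ^ 3"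
      by (simp flip: power_mult)
    also have "\<dots> \<le> W ^ 3"
      unfolding W_def using that by (intro power_mono member_le_sum) auto
    finally show ?thesis .
  qed
  have "(\<integral>\<^sup>+x. ennreal (cmod (ext_op {0..1} g x)) ^ 12 \<partial>lborel)
      \<le> (\<integral>\<^sup>+x. ennreal (real n ^ 12) *
          (\<Sum>k<n. ennreal (cmod (ext_op (grid_ivl n k) g x)) ^ 12) \<partial>lborel)"
    by (rule nn_integral_mono) (rule ext_op_power_le_sum_grid_ivl[OF g assms])
  also have "\<dots> = ennreal (real n ^ 12) * (\<Sum>k<n. L12_norm (ext_op (grid_ivl n k) g) ^ 12)"
    using power_enn_root[of 12, simplified]
    by (simp add: nn_integral_cmult nn_integral_sum L12_norm_def)
  also have "\<dots> \<le> ennreal (real n ^ 12) * (of_nat n * W ^ 3)"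
    using sum_bounded_above[of "{..<n}" _ "W ^ 3"] piece by (intro mult_left_mono) auto
  also have "\<dots> = ennreal (real n ^ 13) * W ^ 3"
    using power_add[of "real n" 12 1]
    by (simp add: ennreal_of_nat_eq_real_of_nat mult.assoc[symmetric] flip: ennreal_mult)
  finally have "L12_norm (ext_op {0..1} g) \<le> enn_root 12 (ennreal (real n ^ 13) * W ^ 3)"
    unfolding L12_norm_def by (rule enn_root_mono[rotated]) simp
  also have "\<dots> = enn_root 12 (ennreal (real n ^ 13)) * enn_root 4 W"
    using enn_root_power_mult[of 4 3 W] by (simp add: enn_root_mult)
  finally show "L12_norm (ext_op {0..1} g) \<le> enn_root 12 (ennreal (real n ^ 13)) * enn_root 4 W" .
qed

lemma Dec_inverse_nat_finite: "0 < n \<Longrightarrow> Dec (1 / real n) < top"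
  unfolding Dec_eq_Inf_decoupling_constants
  by (rule le_less_trans[OF Inf_lower[OF decoupling_constants_trivial]]) (simp_all add: enn_root_ennreal)

theorem corollary2p2:
  fixes n1 n2 :: nat and \<delta>1 \<delta>2 :: real
  assumes "n1 > 0" and "n2 > 0"
    and "\<delta>1 = 1 / real n1" and "\<delta>2 = 1 / real n2"
  shows "Dec (\<delta>1 * \<delta>2) \<le> Dec \<delta>1 * Dec \<delta>2"
proof -
  have "\<delta>1 * \<delta>2 = 1 / real (n1 * n2)"
    using assms(3,4) by simp
  then have "Inf (decoupling_constants (\<delta>1 * \<delta>2)) \<le> C1 * C2"
    if "C1 \<in> decoupling_constants \<delta>1" and "C2 \<in> decoupling_constants \<delta>2" for C1 C2
    using decoupling_constants_mult[OF assms(1,2)] that assms(3,4) by (intro Inf_lower) simp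
  moreover have "Dec \<delta>1 < top" and "Dec \<delta>2 < top"
    using Dec_inverse_nat_finite assms by simp_all
  ultimately show ?thesis
    unfolding Dec_eq_Inf_decoupling_constants by (rule le_Inf_mult_Inf_ennreal)
qed

end
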